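(* Consider the barotropic two-phase setting described in the context. Let $(\alpha_1,\rho_1,\rho_2,u_1,u_2)$ be a smooth solution, with $\alpha_1\in(0,1)$ and $\rho_1,\rho_2>0$, of the homogeneous one-dimensional conservative SHTC system \begin{align*} &\partial_t(\alpha_1\rho)+\partial_x(\alpha_1\rho u)=0,\qquad \partial_t(\alpha_1\rho_1)+\partial_x(\alpha_1\rho_1u_1)=0,\qquad \partial_t\rho+\partial_x(\rho u)=0,\\ &\partial_t(\alpha_1\rho_1u_1+\alpha_2\rho_2u_2)+\partial_x(\alpha_1\rho_1u_1^2+\alpha_2\rho_2u_2^2+\alpha_1p_1+\alpha_2p_2)=0,\\ &\partial_t w+\partial_x\Big(\tfrac12u_1^2-\tfrac12u_2^2+\Psi_1(\rho_1)-\Psi_2(\rho_2)\Big)=0 . \end{align*} Then $W=(\alpha_1,\rho_1,\rho_2,u_1,u_2)^T$ satisfies $\partial_tW+A(W)\partial_xW=0$ with \[ A(W)=\begin{pmatrix} u & 0 & 0 & 0 & 0\\ \frac{\rho_1}{\alpha_1}(u_1-u) & u_1 & 0 & \rho_1 & 0\\ \frac{\rho_2}{\alpha_2}(u-u_2) & 0 & u_2 & 0 & \rho_2\\ \frac{p_1-p_2}{\rho} & \frac{a_1^2}{\rho_1} & 0 & u_1 & 0\\ \frac{p_1-p_2}{\rho} & 0 & \frac{a_2^2}{\rho_2} & 0 & u_2 \end{pmatrix}. \] Moreover, for every state $W$ with $\alpha_1\in(0,1)$, $\rho_1,\rho_2>0$: (i) $A R_{1\pm}=(u_1\pm a_1)R_{1\pm}$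 and $A R_{2\pm}=(u_2\pm a_2)R_{2\pm}$, where $R_{1\pm}=(0,1,0,\pm a_1/\rho_1,0)^T$ and $R_{2\pm}=(0,0,1,0,\pm a_2/\rho_2)^T$; (ii) $A R_C=u\,R_C$, where $R_C=\big(\varepsilon_1\varepsilon_2,\ \delta_1\varepsilon_2,\ \delta_2\varepsilon_1,\ (u-u_1)\varepsilon_2\gamma_1,\ -(u-u_2)\varepsilon_1\gamma_2\big)^T$ with $\delta_1=\frac{p_1-p_2}{\rho}-\frac{(u-u_1)^2}{\alpha_1}$, $\delta_2=\frac{p_1-p_2}{\rho}+\frac{(u-u_2)^2}{\alpha_2}$, $\varepsilon_i=\frac{(u-u_i)^2-a_i^2}{\rho_i}$, $\gamma_1=\frac{\alpha_1(p_1-p_2)-\rho a_1^2}{\alpha_1\rho_1\rho}$, $\gamma_2=-\frac{\alpha_2(p_1-p_2)+\rho a_2^2}{\alpha_2\rho_2\rho}$; (iii) viewing $\lambda_{i\pm}=u_i\pm a_i(\rho_i)$ and $\lambda_C=u=(\alpha_1\rho_1u_1+\alpha_2\rho_2u_2)/(\alpha_1\rho_1+\alpha_2\rho_2)$ as functions of $W$, one has $\nabla_W\lambda_{i\pm}\cdot R_{i\pm}=\pm\frac{1}{\rho_i}\frac{d(\rho_ia_i(\rho_i))}{d\rho_i}$ for $i=1,2$, and $\nabla_W\lambda_C\cdot R_C=0$ identically (the field associated with $\lambda_C$ is linearly degenerate).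
   Context: For $i=1,2$ let $p_i:(0,\infty)\to\mathbb{R}$ be smooth with $p_i'>0$, and let $a_i(\rho_i)=\sqrt{p_i'(\rho_i)}$ be the phase sound speed. Let $\varphi_i$ be an antiderivative of $\rho\mapsto p_i(\rho)/\rho^2$ and $\Psi_i(\rho)=\varphi_i(\rho)+p_i(\rho)/\rho$, so $\Psi_i'=a_i^2/\rho$ (in the isentropic case $\varphi_i$ is the specific internal energy and $\Psi_i$ the specific enthalpy; in the isothermal case $\varphi_i$ is the specific free energy and $\Psi_i$ the specific Gibbs energy). Primitive variables: volume fraction $\alpha_1\in(0,1)$, phase densities $\rho_1,\rho_2>0$, phase velocities $u_1,u_2$. Derived quantities: $\alpha_2=1-\alpha_1$, $\rho=\alpha_1\rho_1+\alpha_2\rho_2$, $c_i=\alpha_i\rho_i/\rho$, $u=c_1u_1+c_2u_2$, $w=u_1-u_2$, $p_i=p_i(\rho_i)$, $a_i=a_i(\rho_i)$. *)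

theory Defs
  imports "HOL-Analysis.Analysis"
begin

text \<open>State vector W = (alpha1, rho1, rho2, u1, u2) :: real^5, components W$1..W$5.
  Pressure laws p1, p2 are passed as parameters.\<close>

definition snd_speed :: "(real \<Rightarrow> real) \<Rightarrow> real \<Rightarrow> real" where
  "snd_speed p r = sqrt (deriv p r)"

definition Psi :: "(real \<Rightarrow> real) \<Rightarrow> (real \<Rightarrow> real) \<Rightarrow> real \<Rightarrow> real" where
  "Psi p phi r = phi r + p r / r"

definition admissible :: "real^5 \<Rightarrow> bool" where
  "admissible W \<longleftrightarrow> 0 < W$1 \<and> W$1 < 1 \<and> 0 < W$2 \<and> 0 < W$3"

definition mix_rho :: "real^5 \<Rightarrow> real" where
  "mix_rho W = W$1 * W$2 + (1 - W$1) * W$3"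

definition mix_u :: "real^5 \<Rightarrow> real" where
  "mix_u W = (W$1 * W$2 * W$4 + (1 - W$1) * W$3 * W$5) / mix_rho W"

definition Amat :: "(real \<Rightarrow> real) \<Rightarrow> (real \<Rightarrow> real) \<Rightarrow> real^5 \<Rightarrow> real^5^5" where
  "Amat p1 p2 W =
    (let a1 = W$1; r1 = W$2; r2 = W$3; v1 = W$4; v2 = W$5; a2 = 1 - a1;
         r = mix_rho W; u = mix_u W; dp = p1 r1 - p2 r2;
         c1 = snd_speed p1 r1; c2 = snd_speed p2 r2
     in vector [
       vector [u, 0, 0, 0, 0],
       vector [r1 / a1 * (v1 - u), v1, 0, r1, 0],
       vector [r2 / a2 * (u - v2), 0, v2, 0, r2],
       vector [dp / r, c1^2 / r1, 0, v1, 0],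
       vector [dp / r, 0, c2^2 / r2, 0, v2]])"

definition R1 :: "(real \<Rightarrow> real) \<Rightarrow> real \<Rightarrow> real^5 \<Rightarrow> real^5" where
  "R1 p1 s W = vector [0, 1, 0, s * snd_speed p1 (W$2) / W$2, 0]"

definition R2 :: "(real \<Rightarrow> real) \<Rightarrow> real \<Rightarrow> real^5 \<Rightarrow> real^5" where
  "R2 p2 s W = vector [0, 0, 1, 0, s * snd_speed p2 (W$3) / W$3]"

definition RC :: "(real \<Rightarrow> real) \<Rightarrow> (real \<Rightarrow> real) \<Rightarrow> real^5 \<Rightarrow> real^5" where
  "RC p1 p2 W =
    (let a1 = W$1; r1 = W$2; r2 = W$3; v1 = W$4; v2 = W$5; a2 = 1 - a1;
         r = mix_rho W; u = mix_u W; dp = p1 r1 - p2 r2;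
         c1 = snd_speed p1 r1; c2 = snd_speed p2 r2;
         d1 = dp / r - (u - v1)^2 / a1;
         d2 = dp / r + (u - v2)^2 / a2;
         e1 = ((u - v1)^2 - c1^2) / r1;
         e2 = ((u - v2)^2 - c2^2) / r2;
         g1 = (a1 * dp - r * c1^2) / (a1 * r1 * r);
         g2 = - (a2 * dp + r * c2^2) / (a2 * r2 * r)
     in vector [e1 * e2, d1 * e2, d2 * e1, (u - v1) * e2 * g1, - (u - v2) * e1 * g2])"

definition lam1 :: "(real \<Rightarrow> real) \<Rightarrow> real \<Rightarrow> real^5 \<Rightarrow> real" where
  "lam1 p1 s W = W$4 + s * snd_speed p1 (W$2)"

definition lam2 :: "(real \<Rightarrow> real) \<Rightarrow> real \<Rightarrow> real^5 \<Rightarrow> real" where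
  "lam2 p2 s W = W$5 + s * snd_speed p2 (W$3)"

definition lamC :: "real^5 \<Rightarrow> real" where
  "lamC W = mix_u W"

definition pdt :: "(real \<times> real \<Rightarrow> 'a::real_normed_vector) \<Rightarrow> real \<times> real \<Rightarrow> 'a" where
  "pdt f z = vector_derivative (\<lambda>s. f (s, snd z)) (at (fst z))"

definition pdx :: "(real \<times> real \<Rightarrow> 'a::real_normed_vector) \<Rightarrow> real \<times> real \<Rightarrow> 'a" where
  "pdx f z = vector_derivative (\<lambda>y. f (fst z, y)) (at (snd z))"

definition smooth2_on :: "(real \<times> real) set \<Rightarrow> (real \<times> real \<Rightarrow> real) \<Rightarrow> bool" where
  "smooth2_on S f \<longleftrightarrow>
     (\<forall>ds :: bool list. \<forall>z\<in>S.
        (foldr (\<lambda>b g. if b then pdt g else pdx g) ds f) differentiable (at z))"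

end

(*
  Write U(W) and F(W) for the conserved densities and fluxes of the system. By the chain rule
  the conservation laws read U'(W) W_t + F'(W) W_x = 0. A direct computation gives
  F'(W) = U'(W) A(W), and U'(W) is injective for admissible states (its rows determine
  alpha1, rho1, rho2 successively, and then u1, u2 through the momentum and the relative
  velocity), so W_t + A(W) W_x = 0.

  For the contact field, the coefficients
  delta_i, epsilon_i, gamma_i of R_C satisfy four scalar relations, and A R_C = u R_C as well
  as grad u . R_C = 0 are linear combinations of them.
*)

theory Submission
  imports Defs
begin

lemma exhaust_5:
  fixes i :: 5
  shows "i = 1 \<or> i = 2 \<or> i = 3 \<or> i = 4 \<or> i = 5"
proof (induct i)
  case (of_int z)
  then have "z = 0 \<or> z = 1 \<or> z = 2 \<or> z = 3 \<or> z = 4" by simp presburger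
  then show ?case by (elim disjE) simp_all
qed

lemma forall_5: "(\<forall>i::5. P i) \<longleftrightarrow> P 1 \<and> P 2 \<and> P 3 \<and> P 4 \<and> P 5"
  by (metis exhaust_5)

lemma UNIV_5: "UNIV = {1, 2, 3, 4, 5::5}"
  using exhaust_5 by auto

lemma sum_5: "sum f (UNIV::5 set) = f 1 + f 2 + f 3 + f 4 + f 5"
  unfolding UNIV_5 by (simp add: ac_simps)

lemma vector_5 [simp]:
  "(vector [a, b, c, d, e] :: 'a::zero^5) $ 1 = a"
  "(vector [a, b, c, d, e] :: 'a^5) $ 2 = b"
  "(vector [a, b, c, d, e] :: 'a^5) $ 3 = c"
  "(vector [a, b, c, d, e] :: 'a^5) $ 4 = d"
  "(vector [a, b, c, d, e] :: 'a^5) $ 5 = e"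
  unfolding vector_def by simp_all

lemma vec_eq_5_iff:
  "(x :: 'a^5) = y \<longleftrightarrow> x$1 = y$1 \<and> x$2 = y$2 \<and> x$3 = y$3 \<and> x$4 = y$4 \<and> x$5 = y$5"
  by (simp add: vec_eq_iff forall_5)

lemma matrix_vector_mult_5:
  "((A :: 'a::semiring_1^5^'m) *v x) $ i
     = A$i$1 * x$1 + A$i$2 * x$2 + A$i$3 * x$3 + A$i$4 * x$4 + A$i$5 * x$5"
  by (simp add: matrix_vector_mult_def sum_5)

lemma matrix_matrix_mult_5:
  "((A :: 'a::semiring_1^5^'m) ** B) $ i $ j
     = A$i$1 * B$1$j + A$i$2 * B$2$j + A$i$3 * B$3$j + A$i$4 * B$4$j + A$i$5 * B$5$j"
  by (simp add: matrix_matrix_mult_def sum_5)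

lemma has_derivative_vec_componentwise:
  fixes f :: "'a::real_normed_vector \<Rightarrow> real^'n"
  shows "(f has_derivative f') (at a within S)
     \<longleftrightarrow> (\<forall>i. ((\<lambda>x. f x $ i) has_derivative (\<lambda>h. f' h $ i)) (at a within S))"
proof -
  have ball: "(\<forall>b\<in>(Basis :: (real^'n) set). Q b) \<longleftrightarrow> (\<forall>i. Q (axis i 1))" for Q
    by (auto simp: Basis_vec_def)
  have comp: "x \<bullet> axis i 1 = x $ i" for x :: "real^'n" and i
    by (rule cart_eq_inner_axis[symmetric])
  show ?thesis
    using has_derivative_componentwise_within[of f f' a S] unfolding ball comp .
qed

lemma differentiable_vector_5:
  fixes f1 f2 f3 f4 f5 :: "'a::real_normed_vector \<Rightarrow> real"
  assumes "f1 differentiable (at a)" "f2 differentiable (at a)" "f3 differentiable (at a)"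
    "f4 differentiable (at a)" "f5 differentiable (at a)"
  shows "(\<lambda>x. vector [f1 x, f2 x, f3 x, f4 x, f5 x] :: real^5) differentiable (at a)"
proof -
  from assms obtain D1 D2 D3 D4 D5 where "(f1 has_derivative D1) (at a)" "(f2 has_derivative D2) (at a)"
    "(f3 has_derivative D3) (at a)" "(f4 has_derivative D4) (at a)" "(f5 has_derivative D5) (at a)"
    unfolding differentiable_def by blast
  then have "((\<lambda>x. vector [f1 x, f2 x, f3 x, f4 x, f5 x] :: real^5)
      has_derivative (\<lambda>h. vector [D1 h, D2 h, D3 h, D4 h, D5 h])) (at a)"
    by (intro has_derivative_vec_componentwise[THEN iffD2]) (simp add: forall_5)
  then show ?thesis
    unfolding differentiable_def by blast
qed

lemma vector_derivative_compose_has_derivative: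
  assumes "f differentiable (at t)" and "(g has_derivative g') (at (f t))"
  shows "vector_derivative (\<lambda>s. g (f s)) (at t) = g' (vector_derivative f (at t))"
proof -
  have "(f has_vector_derivative vector_derivative f (at t)) (at t)"
    using assms(1) vector_derivative_works by blast
  from vector_derivative_diff_chain_within[OF this has_derivative_at_withinI[OF assms(2)]]
  show ?thesis
    by (simp add: o_def vector_derivative_at)
qed

lemma pdt_compose:
  assumes "f differentiable (at z)" and "(g has_derivative g') (at (f z))"
  shows "pdt (\<lambda>z. g (f z)) z = g' (pdt f z)"
proof -
  have "(\<lambda>s. (s, snd z)) differentiable (at (fst z))"
    by (auto intro!: derivative_eq_intros simp: differentiable_def)
  then have "(\<lambda>s. f (s, snd z)) differentiable (at (fst z))"
    using assms(1) by (intro differentiable_compose[of f "\<lambda>s. (s, snd z)"]) simp_all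
  from vector_derivative_compose_has_derivative[OF this, of g g'] assms(2)
  show ?thesis
    unfolding pdt_def by simp
qed

lemma pdx_compose:
  assumes "f differentiable (at z)" and "(g has_derivative g') (at (f z))"
  shows "pdx (\<lambda>z. g (f z)) z = g' (pdx f z)"
proof -
  have "(\<lambda>y. (fst z, y)) differentiable (at (snd z))"
    by (auto intro!: derivative_eq_intros simp: differentiable_def)
  then have "(\<lambda>y. f (fst z, y)) differentiable (at (snd z))"
    using assms(1) by (intro differentiable_compose[of f "\<lambda>y. (fst z, y)"]) simp_all
  from vector_derivative_compose_has_derivative[OF this, of g g'] assms(2)
  show ?thesis
    unfolding pdx_def by simp
qed

lemma smooth2_on_imp_differentiable: "smooth2_on S f \<Longrightarrow> z \<in> S \<Longrightarrow> f differentiable (at z)"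
  unfolding smooth2_on_def by (drule spec[of _ "[]"]) simp

lemma mix_rho_pos: "admissible W \<Longrightarrow> 0 < mix_rho W"
  unfolding admissible_def mix_rho_def by (simp add: add_pos_pos)

definition cons_vars :: "real^5 \<Rightarrow> real^5" where
  "cons_vars W = vector [W$1 * mix_rho W, W$1 * W$2, mix_rho W,
     W$1 * W$2 * W$4 + (1 - W$1) * W$3 * W$5, W$4 - W$5]"

definition cons_flux ::
    "(real \<Rightarrow> real) \<Rightarrow> (real \<Rightarrow> real) \<Rightarrow> (real \<Rightarrow> real) \<Rightarrow> (real \<Rightarrow> real) \<Rightarrow> real^5 \<Rightarrow> real^5" where
  "cons_flux p1 p2 phi1 phi2 W = vector [W$1 * mix_rho W * mix_u W, W$1 * W$2 * W$4,
     W$1 * W$2 * W$4 + (1 - W$1) * W$3 * W$5,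
     W$1 * W$2 * (W$4)^2 + (1 - W$1) * W$3 * (W$5)^2 + W$1 * p1 (W$2) + (1 - W$1) * p2 (W$3),
     (W$4)^2 / 2 - (W$5)^2 / 2 + Psi p1 phi1 (W$2) - Psi p2 phi2 (W$3)]"

definition cons_jacobian :: "real^5 \<Rightarrow> real^5^5" where
  "cons_jacobian W =
    (let a = W$1; b = W$2; c = W$3; v = W$4; w = W$5 in vector [
       vector [mix_rho W + a * (b - c), a^2, a * (1 - a), 0, 0],
       vector [b, a, 0, 0, 0],
       vector [b - c, a, 1 - a, 0, 0],
       vector [b * v - c * w, a * v, (1 - a) * w, a * b, (1 - a) * c],
       vector [0, 0, 0, 1, -1]])"

definition flux_jacobian :: "(real \<Rightarrow> real) \<Rightarrow> (real \<Rightarrow> real) \<Rightarrow> real^5 \<Rightarrow> real^5^5" where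
  "flux_jacobian p1 p2 W =
    (let a = W$1; b = W$2; c = W$3; v = W$4; w = W$5;
         m = a * b * v + (1 - a) * c * w; k1 = deriv p1 b; k2 = deriv p2 c in vector [
       vector [m + a * (b * v - c * w), a^2 * v, a * (1 - a) * w, a^2 * b, a * (1 - a) * c],
       vector [b * v, a * v, 0, a * b, 0],
       vector [b * v - c * w, a * v, (1 - a) * w, a * b, (1 - a) * c],
       vector [b * v^2 - c * w^2 + p1 b - p2 c, a * (v^2 + k1), (1 - a) * (w^2 + k2),
               2 * a * b * v, 2 * (1 - a) * c * w],
       vector [0, k1 / b, - (k2 / c), v, - w]])"

lemma has_derivative_vec_nth: "((\<lambda>x. x $ i) has_derivative (\<lambda>h. h $ i)) F"
  by (rule bounded_linear_imp_has_derivative) (rule bounded_linear_vec_nth)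

lemma has_derivative_vec_nth_compose:
  "(f has_real_derivative f') (at (W$i)) \<Longrightarrow> ((\<lambda>W. f (W$i)) has_derivative (\<lambda>h. h$i * f')) (at W)"
  by (rule DERIV_compose_FDERIV[OF _ has_derivative_vec_nth])

lemma has_derivative_cons_vars: "(cons_vars has_derivative (*v) (cons_jacobian W)) (at W)"
  unfolding has_derivative_vec_componentwise forall_5 matrix_vector_mult_5
    cons_vars_def cons_jacobian_def mix_rho_def Let_def vector_5
  by (auto intro!: derivative_eq_intros has_derivative_vec_nth
      simp: fun_eq_iff algebra_simps power2_eq_square)

lemma has_derivative_mix_rho:
  "(mix_rho has_derivative (\<lambda>h. h$1 * (W$2 - W$3) + W$1 * h$2 + (1 - W$1) * h$3)) (at W)"
  unfolding mix_rho_def [abs_def]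
  by (auto intro!: derivative_eq_intros has_derivative_vec_nth simp: fun_eq_iff algebra_simps)

lemma has_derivative_mix_u:
  fixes W :: "real^5"
  assumes "mix_rho W \<noteq> 0"
  shows "(mix_u has_derivative (\<lambda>h. (h$1 * (W$2 * (W$4 - mix_u W) - W$3 * (W$5 - mix_u W))
      + W$1 * (W$4 - mix_u W) * h$2 + (1 - W$1) * (W$5 - mix_u W) * h$3
      + W$1 * W$2 * h$4 + (1 - W$1) * W$3 * h$5) / mix_rho W)) (at W)"
    (is "(_ has_derivative ?D) _")
proof -
  let ?m = "W$1 * W$2 * W$4 + (1 - W$1) * W$3 * W$5"
  let ?m' = "\<lambda>h::real^5. h$1 * W$2 * W$4 + W$1 * h$2 * W$4 + W$1 * W$2 * h$4
    - h$1 * W$3 * W$5 + (1 - W$1) * h$3 * W$5 + (1 - W$1) * W$3 * h$5"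
  let ?r' = "\<lambda>h::real^5. h$1 * W$2 + W$1 * h$2 - h$1 * W$3 + (1 - W$1) * h$3"
  have "(mix_u has_derivative (\<lambda>h. (?m' h * mix_rho W - ?m * ?r' h) / (mix_rho W)^2)) (at W)"
    using assms unfolding mix_u_def [abs_def] mix_rho_def
    by (auto intro!: derivative_eq_intros has_derivative_vec_nth
        simp: fun_eq_iff field_simps power2_eq_square)
  moreover have "(\<lambda>h. (?m' h * mix_rho W - ?m * ?r' h) / (mix_rho W)^2) = ?D"
    using assms unfolding mix_u_def by (auto simp: fun_eq_iff field_simps power2_eq_square)
  ultimately show ?thesis
    by simp
qed

lemma has_real_derivative_Psi:
  assumes "p differentiable (at r)" and "(phi has_real_derivative p r / r^2) (at r)" and "r \<noteq> 0"
  shows "(Psi p phi has_real_derivative deriv p r / r) (at r)"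
proof -
  have "(p has_real_derivative deriv p r) (at r)"
    using assms(1) by (simp add: DERIV_deriv_iff_real_differentiable)
  then have "(Psi p phi has_real_derivative p r / r^2 + (deriv p r * r - p r) / r^2) (at r)"
    unfolding Psi_def [abs_def] using assms(2,3)
    by (auto intro!: derivative_eq_intros simp: power2_eq_square)
  then show ?thesis
    using assms(3) by (simp add: field_simps power2_eq_square)
qed

lemma has_derivative_cons_flux:
  fixes W :: "real^5"
  assumes "0 < W$2" "0 < W$3" "mix_rho W \<noteq> 0"
    and "p1 differentiable (at (W$2))" "p2 differentiable (at (W$3))"
    and "(phi1 has_real_derivative p1 (W$2) / (W$2)^2) (at (W$2))"
    and "(phi2 has_real_derivative p2 (W$3) / (W$3)^2) (at (W$3))"
  shows "(cons_flux p1 p2 phi1 phi2 has_derivative (*v) (flux_jacobian p1 p2 W)) (at W)"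
proof -
  have p1: "((\<lambda>W. p1 (W$2)) has_derivative (\<lambda>h. h$2 * deriv p1 (W$2))) (at W)"
    using assms(4) by (intro has_derivative_vec_nth_compose) (simp add: DERIV_deriv_iff_real_differentiable)
  have p2: "((\<lambda>W. p2 (W$3)) has_derivative (\<lambda>h. h$3 * deriv p2 (W$3))) (at W)"
    using assms(5) by (intro has_derivative_vec_nth_compose) (simp add: DERIV_deriv_iff_real_differentiable)
  have Psi1: "((\<lambda>W. Psi p1 phi1 (W$2)) has_derivative (\<lambda>h. h$2 * (deriv p1 (W$2) / W$2))) (at W)"
    using assms by (intro has_derivative_vec_nth_compose has_real_derivative_Psi) simp_all
  have Psi2: "((\<lambda>W. Psi p2 phi2 (W$3)) has_derivative (\<lambda>h. h$3 * (deriv p2 (W$3) / W$3))) (at W)"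
    using assms by (intro has_derivative_vec_nth_compose has_real_derivative_Psi) simp_all
  show ?thesis
    unfolding has_derivative_vec_componentwise forall_5 matrix_vector_mult_5
      cons_flux_def flux_jacobian_def Let_def vector_5
  proof (intro conjI)
    show "((\<lambda>x. x $ 1 * mix_rho x * mix_u x) has_derivative
        (\<lambda>h. (W$1 * W$2 * W$4 + (1 - W$1) * W$3 * W$5 + W$1 * (W$2 * W$4 - W$3 * W$5)) * h$1
          + W$1^2 * W$4 * h$2 + W$1 * (1 - W$1) * W$5 * h$3
          + W$1^2 * W$2 * h$4 + W$1 * (1 - W$1) * W$3 * h$5)) (at W)"
      using assms(3)
      by (intro has_derivative_eq_rhs[OF has_derivative_mult[OF has_derivative_mult
            [OF has_derivative_vec_nth has_derivative_mix_rho] has_derivative_mix_u]])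
        (simp_all add: fun_eq_iff mix_u_def field_simps power2_eq_square)
  qed (auto intro!: derivative_eq_intros has_derivative_vec_nth p1 p2 Psi1 Psi2
        simp: fun_eq_iff algebra_simps power2_eq_square)
qed

lemma power2_snd_speed: "0 \<le> deriv p r \<Longrightarrow> (snd_speed p r)^2 = deriv p r"
  unfolding snd_speed_def by simp

lemma flux_jacobian_eq:
  assumes "admissible W" "0 \<le> deriv p1 (W$2)" "0 \<le> deriv p2 (W$3)"
  shows "flux_jacobian p1 p2 W = cons_jacobian W ** Amat p1 p2 W"
proof -
  define r where "r = mix_rho W"
  have nz: "r \<noteq> 0" "W$1 \<noteq> 0" "1 - W$1 \<noteq> 0" "W$2 \<noteq> 0" "W$3 \<noteq> 0"
    using mix_rho_pos[OF assms(1)] assms(1) unfolding r_def admissible_def by auto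
  have r: "W$1 * W$2 + (1 - W$1) * W$3 = r"
    unfolding r_def mix_rho_def ..
  show ?thesis
    unfolding vec_eq_iff forall_5 matrix_matrix_mult_5
      flux_jacobian_def cons_jacobian_def Amat_def Let_def vector_5 mix_u_def r_def [symmetric]
      power2_snd_speed [OF assms(2)] power2_snd_speed [OF assms(3)]
    using nz
    \<comment> \<open>clear denominators keeping r atomic; only the momentum row needs its definition\<close>
    by (simp add: field_simps power2_eq_square)
      (simp add: r [symmetric] algebra_simps)
qed

lemma cons_jacobian_injective:
  assumes "admissible W" and "cons_jacobian W *v h = 0"
  shows "h = 0"
proof -
  have a: "0 < W$1" "W$1 < 1" and r: "0 < mix_rho W"
    using assms(1) mix_rho_pos unfolding admissible_def by auto
  have rows: "(mix_rho W + W$1 * (W$2 - W$3)) * h$1 + (W$1)^2 * h$2 + W$1 * (1 - W$1) * h$3 = 0"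
    "W$2 * h$1 + W$1 * h$2 = 0"
    "(W$2 - W$3) * h$1 + W$1 * h$2 + (1 - W$1) * h$3 = 0"
    "(W$2 * W$4 - W$3 * W$5) * h$1 + W$1 * W$4 * h$2 + (1 - W$1) * W$5 * h$3
       + W$1 * W$2 * h$4 + (1 - W$1) * W$3 * h$5 = 0"
    "h$4 - h$5 = 0"
    using assms(2) by (auto simp: vec_eq_5_iff matrix_vector_mult_5 cons_jacobian_def Let_def)
  have "mix_rho W * h$1 = 0"
    using rows(1) rows(3) by algebra
  then have h1: "h$1 = 0"
    using r by simp
  then have h2: "h$2 = 0" and h3: "h$3 = 0"
    using rows(2,3) a by simp_all
  have h45: "h$4 = h$5"
    using rows(5) by simp
  then have "mix_rho W * h$5 = 0"
    using rows(4) h1 h2 h3 unfolding mix_rho_def by (simp add: algebra_simps)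
  then show "h = 0"
    using r h1 h2 h3 h45 unfolding vec_eq_5_iff by simp
qed

lemma conservative_imp_quasilinear:
  fixes Wf :: "real \<times> real \<Rightarrow> real^5"
  assumes Wf: "Wf differentiable (at z)" and adm: "admissible (Wf z)"
    and p1: "p1 differentiable (at (Wf z $ 2))" "0 \<le> deriv p1 (Wf z $ 2)"
    and p2: "p2 differentiable (at (Wf z $ 3))" "0 \<le> deriv p2 (Wf z $ 3)"
    and phi1: "(phi1 has_real_derivative p1 (Wf z $ 2) / (Wf z $ 2)^2) (at (Wf z $ 2))"
    and phi2: "(phi2 has_real_derivative p2 (Wf z $ 3) / (Wf z $ 3)^2) (at (Wf z $ 3))"
    and law: "\<And>k. pdt (\<lambda>z. cons_vars (Wf z) $ k) z
                 + pdx (\<lambda>z. cons_flux p1 p2 phi1 phi2 (Wf z) $ k) z = 0"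
  shows "pdt Wf z + Amat p1 p2 (Wf z) *v pdx Wf z = 0"
proof -
  let ?W = "Wf z"
  have pos: "0 < ?W $ 2" "0 < ?W $ 3" "mix_rho ?W \<noteq> 0"
    using adm mix_rho_pos[OF adm] unfolding admissible_def by auto
  have U: "((\<lambda>W. cons_vars W $ k) has_derivative (\<lambda>h. (cons_jacobian ?W *v h) $ k)) (at ?W)" for k
    using has_derivative_cons_vars has_derivative_vec_componentwise by blast
  have F: "((\<lambda>W. cons_flux p1 p2 phi1 phi2 W $ k) has_derivative
      (\<lambda>h. (flux_jacobian p1 p2 ?W *v h) $ k)) (at ?W)" for k
    using has_derivative_cons_flux[OF pos p1(1) p2(1) phi1 phi2] has_derivative_vec_componentwise
    by blast
  have "(cons_jacobian ?W *v pdt Wf z + flux_jacobian p1 p2 ?W *v pdx Wf z) $ k = 0" for k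
    using law[of k] unfolding pdt_compose[OF Wf U] pdx_compose[OF Wf F] by simp
  then have "cons_jacobian ?W *v (pdt Wf z + Amat p1 p2 ?W *v pdx Wf z) = 0"
    by (simp add: vec_eq_iff flux_jacobian_eq[OF adm p1(2) p2(2)] matrix_vector_mul_assoc
        matrix_vector_right_distrib)
  then show ?thesis
    using cons_jacobian_injective[OF adm] by blast
qed

lemma Amat_R1:
  assumes "W$2 \<noteq> 0" "0 \<le> deriv p1 (W$2)" "s^2 = 1"
  shows "Amat p1 p2 W *v R1 p1 s W = (W$4 + s * snd_speed p1 (W$2)) *s R1 p1 s W"
  using assms unfolding vec_eq_5_iff matrix_vector_mult_5 Amat_def R1_def Let_def
  by (simp add: power2_snd_speed field_simps power2_eq_square)

lemma Amat_R2:
  assumes "W$3 \<noteq> 0" "0 \<le> deriv p2 (W$3)" "s^2 = 1"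
  shows "Amat p1 p2 W *v R2 p2 s W = (W$5 + s * snd_speed p2 (W$3)) *s R2 p2 s W"
  using assms unfolding vec_eq_5_iff matrix_vector_mult_5 Amat_def R2_def Let_def
  by (simp add: power2_snd_speed field_simps power2_eq_square)

lemma contact_coefficient_relations:
  fixes a1 a2 b c r u v w dp k1 k2 :: real
  assumes "a1 \<noteq> 0" "a2 \<noteq> 0" "b \<noteq> 0" "c \<noteq> 0" "r \<noteq> 0"
  defines "d1 \<equiv> dp / r - (u - v)^2 / a1" and "d2 \<equiv> dp / r + (u - w)^2 / a2"
    and "e1 \<equiv> ((u - v)^2 - k1) / b" and "e2 \<equiv> ((u - w)^2 - k2) / c"
    and "g1 \<equiv> (a1 * dp - r * k1) / (a1 * b * r)"
    and "g2 \<equiv> - (a2 * dp + r * k2) / (a2 * c * r)"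
  shows "b * e1 + a1 * d1 = a1 * b * g1"
    and "a2 * d2 + a2 * c * g2 = c * e2"
    and "dp / r * e1 + k1 / b * d1 = (u - v)^2 * g1"
    and "dp / r * e2 + k2 / c * d2 = - ((u - w)^2 * g2)"
  using assms unfolding d1_def d2_def e1_def e2_def g1_def g2_def
  by (simp_all add: field_simps power2_eq_square)

lemma contact_eigen_identities:
  fixes a1 a2 b c q u v w k1 k2 d1 d2 e1 e2 g1 g2 :: real
  assumes "a1 \<noteq> 0" "a2 \<noteq> 0"
    and rel1: "b * e1 + a1 * d1 = a1 * b * g1"
    and rel2: "a2 * d2 + a2 * c * g2 = c * e2"
    and rel3: "q * e1 + k1 / b * d1 = (u - v)^2 * g1"
    and rel4: "q * e2 + k2 / c * d2 = - ((u - w)^2 * g2)"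
  shows "b / a1 * (v - u) * (e1 * e2) + v * (d1 * e2) + b * ((u - v) * e2 * g1) = u * (d1 * e2)"
    and "c / a2 * (u - w) * (e1 * e2) + w * (d2 * e1) + c * (- (u - w) * e1 * g2) = u * (d2 * e1)"
    and "q * (e1 * e2) + k1 / b * (d1 * e2) + v * ((u - v) * e2 * g1) = u * ((u - v) * e2 * g1)"
    and "q * (e1 * e2) + k2 / c * (d2 * e1) + w * (- (u - w) * e1 * g2)
           = u * (- (u - w) * e1 * g2)"
    and "e1 * e2 * (b * (v - u) - c * (w - u)) + a1 * (v - u) * (d1 * e2) + a2 * (w - u) * (d2 * e1)
           + a1 * b * ((u - v) * e2 * g1) + a2 * c * (- (u - w) * e1 * g2) = 0"
proof -
  have "b / a1 * (v - u) * (e1 * e2) + v * (d1 * e2) + b * ((u - v) * e2 * g1) - u * (d1 * e2)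
      = (v - u) * e2 * (b * e1 + a1 * d1 - a1 * b * g1) / a1"
    using assms(1) by (simp add: field_simps)
  then show "b / a1 * (v - u) * (e1 * e2) + v * (d1 * e2) + b * ((u - v) * e2 * g1) = u * (d1 * e2)"
    using rel1 by simp
  have "c / a2 * (u - w) * (e1 * e2) + w * (d2 * e1) + c * (- (u - w) * e1 * g2) - u * (d2 * e1)
      = (u - w) * e1 * (c * e2 - a2 * d2 - a2 * c * g2) / a2"
    using assms(2) by (simp add: field_simps)
  moreover have "c * e2 - a2 * d2 - a2 * c * g2 = 0"
    using rel2 by simp
  ultimately show "c / a2 * (u - w) * (e1 * e2) + w * (d2 * e1) + c * (- (u - w) * e1 * g2) = u * (d2 * e1)"
    by simp
  have "q * (e1 * e2) + k1 / b * (d1 * e2) + v * ((u - v) * e2 * g1) - u * ((u - v) * e2 * g1)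
      = e2 * (q * e1 + k1 / b * d1 - (u - v)^2 * g1)"
    by (simp add: algebra_simps power2_eq_square)
  then show "q * (e1 * e2) + k1 / b * (d1 * e2) + v * ((u - v) * e2 * g1) = u * ((u - v) * e2 * g1)"
    using rel3 by simp
  have "q * (e1 * e2) + k2 / c * (d2 * e1) + w * (- (u - w) * e1 * g2) - u * (- (u - w) * e1 * g2)
      = e1 * (q * e2 + k2 / c * d2 + (u - w)^2 * g2)"
    by (simp add: algebra_simps power2_eq_square)
  then show "q * (e1 * e2) + k2 / c * (d2 * e1) + w * (- (u - w) * e1 * g2)
      = u * (- (u - w) * e1 * g2)"
    using rel4 by simp
  have "e1 * e2 * (b * (v - u) - c * (w - u)) + a1 * (v - u) * (d1 * e2) + a2 * (w - u) * (d2 * e1)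
        + a1 * b * ((u - v) * e2 * g1) + a2 * c * (- (u - w) * e1 * g2)
      = (v - u) * e2 * (b * e1 + a1 * d1 - a1 * b * g1) + (w - u) * e1 * (a2 * d2 + a2 * c * g2 - c * e2)"
    by (simp add: algebra_simps)
  then show "e1 * e2 * (b * (v - u) - c * (w - u)) + a1 * (v - u) * (d1 * e2)
      + a2 * (w - u) * (d2 * e1) + a1 * b * ((u - v) * e2 * g1) + a2 * c * (- (u - w) * e1 * g2) = 0"
    using rel1 rel2 by simp
qed

lemma RC_contact_form:
  assumes "admissible W"
  obtains d1 d2 e1 e2 g1 g2 where
    "RC p1 p2 W = vector [e1 * e2, d1 * e2, d2 * e1,
        (mix_u W - W$4) * e2 * g1, - (mix_u W - W$5) * e1 * g2]"
    and "W$2 * e1 + W$1 * d1 = W$1 * W$2 * g1"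
    and "(1 - W$1) * d2 + (1 - W$1) * W$3 * g2 = W$3 * e2"
    and "(p1 (W$2) - p2 (W$3)) / mix_rho W * e1 + (snd_speed p1 (W$2))^2 / W$2 * d1
           = (mix_u W - W$4)^2 * g1"
    and "(p1 (W$2) - p2 (W$3)) / mix_rho W * e2 + (snd_speed p2 (W$3))^2 / W$3 * d2
           = - ((mix_u W - W$5)^2 * g2)"
proof -
  have nz: "W$1 \<noteq> 0" "1 - W$1 \<noteq> 0" "W$2 \<noteq> 0" "W$3 \<noteq> 0" "mix_rho W \<noteq> 0"
    using assms mix_rho_pos[OF assms] unfolding admissible_def by auto
  define dp where "dp = p1 (W$2) - p2 (W$3)"
  define d1 where "d1 = dp / mix_rho W - (mix_u W - W$4)^2 / W$1"
  define d2 where "d2 = dp / mix_rho W + (mix_u W - W$5)^2 / (1 - W$1)"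
  define e1 where "e1 = ((mix_u W - W$4)^2 - (snd_speed p1 (W$2))^2) / W$2"
  define e2 where "e2 = ((mix_u W - W$5)^2 - (snd_speed p2 (W$3))^2) / W$3"
  define g1 where "g1 = (W$1 * dp - mix_rho W * (snd_speed p1 (W$2))^2) / (W$1 * W$2 * mix_rho W)"
  define g2 where "g2 = - ((1 - W$1) * dp + mix_rho W * (snd_speed p2 (W$3))^2)
                          / ((1 - W$1) * W$3 * mix_rho W)"
  show thesis
  proof (rule that)
    show "RC p1 p2 W = vector [e1 * e2, d1 * e2, d2 * e1,
        (mix_u W - W$4) * e2 * g1, - (mix_u W - W$5) * e1 * g2]"
      unfolding RC_def Let_def dp_def d1_def d2_def e1_def e2_def g1_def g2_def ..
    show "W$2 * e1 + W$1 * d1 = W$1 * W$2 * g1"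
      unfolding d1_def e1_def g1_def by (rule contact_coefficient_relations(1)[OF nz])
    show "(1 - W$1) * d2 + (1 - W$1) * W$3 * g2 = W$3 * e2"
      unfolding d2_def e2_def g2_def by (rule contact_coefficient_relations(2)[OF nz])
    show "(p1 (W$2) - p2 (W$3)) / mix_rho W * e1 + (snd_speed p1 (W$2))^2 / W$2 * d1
           = (mix_u W - W$4)^2 * g1"
      unfolding d1_def e1_def g1_def dp_def by (rule contact_coefficient_relations(3)[OF nz])
    show "(p1 (W$2) - p2 (W$3)) / mix_rho W * e2 + (snd_speed p2 (W$3))^2 / W$3 * d2
           = - ((mix_u W - W$5)^2 * g2)"
      unfolding d2_def e2_def g2_def dp_def by (rule contact_coefficient_relations(4)[OF nz])
  qed
qed

lemma contact_field:
  assumes "admissible W"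
  shows "Amat p1 p2 W *v RC p1 p2 W = mix_u W *s RC p1 p2 W"
    and "lamC differentiable (at W)"
    and "frechet_derivative lamC (at W) (RC p1 p2 W) = 0"
proof -
  obtain d1 d2 e1 e2 g1 g2 where RC: "RC p1 p2 W = vector [e1 * e2, d1 * e2, d2 * e1,
        (mix_u W - W$4) * e2 * g1, - (mix_u W - W$5) * e1 * g2]"
    and rels: "W$2 * e1 + W$1 * d1 = W$1 * W$2 * g1"
      "(1 - W$1) * d2 + (1 - W$1) * W$3 * g2 = W$3 * e2"
      "(p1 (W$2) - p2 (W$3)) / mix_rho W * e1 + (snd_speed p1 (W$2))^2 / W$2 * d1
         = (mix_u W - W$4)^2 * g1"
      "(p1 (W$2) - p2 (W$3)) / mix_rho W * e2 + (snd_speed p2 (W$3))^2 / W$3 * d2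
         = - ((mix_u W - W$5)^2 * g2)"
    using RC_contact_form[OF assms] .
  have "W$1 \<noteq> 0" "1 - W$1 \<noteq> 0"
    using assms unfolding admissible_def by auto
  note identities = contact_eigen_identities[OF this rels]
  then show "Amat p1 p2 W *v RC p1 p2 W = mix_u W *s RC p1 p2 W"
    unfolding vec_eq_5_iff matrix_vector_mult_5 Amat_def Let_def RC by simp
  have D: "(lamC has_derivative (\<lambda>h. (h$1 * (W$2 * (W$4 - mix_u W) - W$3 * (W$5 - mix_u W))
      + W$1 * (W$4 - mix_u W) * h$2 + (1 - W$1) * (W$5 - mix_u W) * h$3
      + W$1 * W$2 * h$4 + (1 - W$1) * W$3 * h$5) / mix_rho W)) (at W)"
    using has_derivative_mix_u mix_rho_pos[OF assms] unfolding lamC_def [abs_def] by simp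
  then show "lamC differentiable (at W)"
    unfolding differentiable_def by blast
  show "frechet_derivative lamC (at W) (RC p1 p2 W) = 0"
    using identities(5) unfolding frechet_derivative_at[OF D, symmetric] RC by simp
qed

lemma has_real_derivative_snd_speed:
  assumes "deriv p differentiable (at r)" and "0 < deriv p r"
  shows "(snd_speed p has_real_derivative deriv (deriv p) r / (2 * snd_speed p r)) (at r)"
proof -
  have "(deriv p has_real_derivative deriv (deriv p) r) (at r)"
    using assms(1) by (simp add: DERIV_deriv_iff_real_differentiable)
  then show ?thesis
    unfolding snd_speed_def using assms(2)
    by (auto intro!: derivative_eq_intros simp: field_simps)
qed

lemma has_derivative_acoustic_speed:
  fixes W :: "real^'n"
  assumes "deriv p differentiable (at (W$k))" and "0 < deriv p (W$k)"
  shows "((\<lambda>W. W$j + s * snd_speed p (W$k)) has_derivative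
           (\<lambda>h. h$j + s * (h$k * (deriv (deriv p) (W$k) / (2 * snd_speed p (W$k)))))) (at W)"
  by (intro has_derivative_add has_derivative_vec_nth has_derivative_mult_right
      has_derivative_vec_nth_compose has_real_derivative_snd_speed assms)

lemma frechet_derivative_acoustic_speed:
  fixes W h :: "real^'n"
  assumes "deriv p differentiable (at (W$k))" and "0 < deriv p (W$k)" and "W$k \<noteq> 0"
    and "h$k = 1" and "h$j = s * snd_speed p (W$k) / W$k"
  shows "frechet_derivative (\<lambda>W. W$j + s * snd_speed p (W$k)) (at W) h
           = s * (1 / W$k) * deriv (\<lambda>r. r * snd_speed p r) (W$k)"
proof -
  let ?c' = "deriv (deriv p) (W$k) / (2 * snd_speed p (W$k))"
  have "deriv (\<lambda>r. r * snd_speed p r) (W$k) = snd_speed p (W$k) + W$k * ?c'"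
    using assms(1,2)
    by (intro DERIV_imp_deriv) (auto intro!: derivative_eq_intros has_real_derivative_snd_speed)
  then show ?thesis
    unfolding frechet_derivative_at[OF has_derivative_acoustic_speed[OF assms(1,2)], symmetric]
    using assms(3-5) by (simp add: field_simps)
qed

theorem mainTheorem1:
  fixes p1 p2 phi1 phi2 :: "real \<Rightarrow> real"
    and Omega :: "(real \<times> real) set"
    and al r1 r2 v1 v2 :: "real \<times> real \<Rightarrow> real"
  assumes p1_smooth: "\<And>n r. r > 0 \<Longrightarrow> ((deriv ^^ n) p1) differentiable (at r)"
    and p2_smooth: "\<And>n r. r > 0 \<Longrightarrow> ((deriv ^^ n) p2) differentiable (at r)"
    and p1_mono: "\<And>r. r > 0 \<Longrightarrow> deriv p1 r > 0"
    and p2_mono: "\<And>r. r > 0 \<Longrightarrow> deriv p2 r > 0"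
    and phi1: "\<And>r. r > 0 \<Longrightarrow> (phi1 has_real_derivative p1 r / r^2) (at r)"
    and phi2: "\<And>r. r > 0 \<Longrightarrow> (phi2 has_real_derivative p2 r / r^2) (at r)"
    and Omega_open: "open Omega"
    and smooth_sol: "smooth2_on Omega al" "smooth2_on Omega r1" "smooth2_on Omega r2"
                    "smooth2_on Omega v1" "smooth2_on Omega v2"
    and ranges: "\<And>z. z \<in> Omega \<Longrightarrow> 0 < al z \<and> al z < 1 \<and> 0 < r1 z \<and> 0 < r2 z"
    and eq1: "\<And>z. z \<in> Omega \<Longrightarrow>
       pdt (\<lambda>z. al z * (al z * r1 z + (1 - al z) * r2 z)) z
     + pdx (\<lambda>z. al z * (al z * r1 z + (1 - al z) * r2 z)
              * ((al z * r1 z * v1 z + (1 - al z) * r2 z * v2 z) / (al z * r1 z + (1 - al z) * r2 z))) z = 0"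
    and eq2: "\<And>z. z \<in> Omega \<Longrightarrow>
       pdt (\<lambda>z. al z * r1 z) z + pdx (\<lambda>z. al z * r1 z * v1 z) z = 0"
    and eq3: "\<And>z. z \<in> Omega \<Longrightarrow>
       pdt (\<lambda>z. al z * r1 z + (1 - al z) * r2 z) z
     + pdx (\<lambda>z. al z * r1 z * v1 z + (1 - al z) * r2 z * v2 z) z = 0"
    and eq4: "\<And>z. z \<in> Omega \<Longrightarrow>
       pdt (\<lambda>z. al z * r1 z * v1 z + (1 - al z) * r2 z * v2 z) z
     + pdx (\<lambda>z. al z * r1 z * (v1 z)^2 + (1 - al z) * r2 z * (v2 z)^2
                + al z * p1 (r1 z) + (1 - al z) * p2 (r2 z)) z = 0"
    and eq5: "\<And>z. z \<in> Omega \<Longrightarrow>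
       pdt (\<lambda>z. v1 z - v2 z) z
     + pdx (\<lambda>z. (v1 z)^2 / 2 - (v2 z)^2 / 2 + Psi p1 phi1 (r1 z) - Psi p2 phi2 (r2 z)) z = 0"
  shows "(\<forall>z\<in>Omega.
            pdt (\<lambda>z. vector [al z, r1 z, r2 z, v1 z, v2 z]) z
          + Amat p1 p2 (vector [al z, r1 z, r2 z, v1 z, v2 z])
              *v pdx (\<lambda>z. vector [al z, r1 z, r2 z, v1 z, v2 z]) z = (0 :: real^5))
       \<and> (\<forall>W::real^5. admissible W \<longrightarrow>
            (\<forall>s\<in>{-1, 1::real}.
                Amat p1 p2 W *v R1 p1 s W = (W$4 + s * snd_speed p1 (W$2)) *s R1 p1 s W
              \<and> Amat p1 p2 W *v R2 p2 s W = (W$5 + s * snd_speed p2 (W$3)) *s R2 p2 s W)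
          \<and> Amat p1 p2 W *v RC p1 p2 W = mix_u W *s RC p1 p2 W
          \<and> (\<forall>s\<in>{-1, 1::real}.
                lam1 p1 s differentiable (at W)
              \<and> frechet_derivative (lam1 p1 s) (at W) (R1 p1 s W)
                  = s * (1 / W$2) * deriv (\<lambda>r. r * snd_speed p1 r) (W$2)
              \<and> lam2 p2 s differentiable (at W)
              \<and> frechet_derivative (lam2 p2 s) (at W) (R2 p2 s W)
                  = s * (1 / W$3) * deriv (\<lambda>r. r * snd_speed p2 r) (W$3))
          \<and> lamC differentiable (at W)
          \<and> frechet_derivative lamC (at W) (RC p1 p2 W) = 0)"
proof (intro conjI ballI allI impI)
  fix z assume z: "z \<in> Omega"
  let ?W = "\<lambda>z. vector [al z, r1 z, r2 z, v1 z, v2 z] :: real^5"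
  have adm: "admissible (?W z)"
    using ranges[OF z] unfolding admissible_def by simp
  have "?W differentiable (at z)"
    using smooth_sol[THEN smooth2_on_imp_differentiable, OF z] by (rule differentiable_vector_5)
  moreover have "pdt (\<lambda>z. cons_vars (?W z) $ k) z
      + pdx (\<lambda>z. cons_flux p1 p2 phi1 phi2 (?W z) $ k) z = 0" for k
    using exhaust_5[of k] eq1[OF z] eq2[OF z] eq3[OF z] eq4[OF z] eq5[OF z]
    by (elim disjE) (simp_all add: cons_vars_def cons_flux_def mix_rho_def mix_u_def)
  ultimately show "pdt ?W z + Amat p1 p2 (?W z) *v pdx ?W z = 0"
    using adm p1_smooth[of _ 0] p2_smooth[of _ 0] p1_mono p2_mono phi1 phi2
    by (intro conservative_imp_quasilinear) (auto simp: admissible_def less_imp_le)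
next
  fix W assume adm: "admissible W"
  have pos: "0 < W$2" "0 < W$3"
    using adm unfolding admissible_def by auto
  have speed1: "deriv p1 differentiable (at (W$2))" "0 < deriv p1 (W$2)"
    and speed2: "deriv p2 differentiable (at (W$3))" "0 < deriv p2 (W$3)"
    using pos p1_smooth[of _ 1] p2_smooth[of _ 1] p1_mono p2_mono by auto
  show "Amat p1 p2 W *v RC p1 p2 W = mix_u W *s RC p1 p2 W"
    "lamC differentiable (at W)" "frechet_derivative lamC (at W) (RC p1 p2 W) = 0"
    using adm by (rule contact_field)+
  fix s :: real assume "s \<in> {-1, 1}"
  then have s: "s^2 = 1"
    by auto
  show "Amat p1 p2 W *v R1 p1 s W = (W$4 + s * snd_speed p1 (W$2)) *s R1 p1 s W"
    using pos speed1 s by (intro Amat_R1) auto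
  show "Amat p1 p2 W *v R2 p2 s W = (W$5 + s * snd_speed p2 (W$3)) *s R2 p2 s W"
    using pos speed2 s by (intro Amat_R2) auto
  show "lam1 p1 s differentiable (at W)"
    unfolding lam1_def [abs_def] differentiable_def
    using has_derivative_acoustic_speed[OF speed1] by blast
  show "lam2 p2 s differentiable (at W)"
    unfolding lam2_def [abs_def] differentiable_def
    using has_derivative_acoustic_speed[OF speed2] by blast
  show "frechet_derivative (lam1 p1 s) (at W) (R1 p1 s W)
      = s * (1 / W$2) * deriv (\<lambda>r. r * snd_speed p1 r) (W$2)"
    unfolding lam1_def [abs_def] using speed1 pos
    by (intro frechet_derivative_acoustic_speed) (simp_all add: R1_def)
  show "frechet_derivative (lam2 p2 s) (at W) (R2 p2 s W)
      = s * (1 / W$3) * deriv (\<lambda>r. r * snd_speed p2 r) (W$3)"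
    unfolding lam2_def [abs_def] using speed2 pos
    by (intro frechet_derivative_acoustic_speed) (simp_all add: R2_def)
qed

end
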